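(* Let $S,T$ be totally ordered sets and $M\colon S\times T\to\mathbf{Vec}$ pointwise finite-dimensional, middle exact and indecomposable. If there exist $x\le x'$ in $S$ and $y\le y'$ in $T$ such that, with $a=(x,y)$, $b=(x,y')$, $c=(x',y)$, $\ker M(a\le b)\cap\ker M(a\le c)\neq0$, then $M\cong k_B$ for a block $B$ of type db.
   Context: $S\times T$ has the product order; modules are functors to $k$-vector spaces with structure maps $M(p\le q)$. Middle exact: for all $x\le x'$, $y\le y'$ with $a=(x,y),b=(x,y'),c=(x',y),d=(x',y')$, the sequence $M_a\to M_b\oplus M_c\to M_d$ with maps $(M(a\le b),M(a\le c))$ and $M(b\le d)-M(c\le d)$ is exact at the middle. A block of type db is a set $J_S\times J_T$ where $J_S\subseteq S$ and $J_T\subseteq T$ are non-empty downward-closed subsets. $k_B$ is $k$ on $B$, $0$ elsewhere, with identity maps within $B$ and zero otherwise. *)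

theory Defs
  imports Main HOL.Vector_Spaces "HOL-Library.Product_Order"
begin

text \<open>All the spaces M_p are realised as subspaces V p of one ambient k-vector space
  'v (with scalar multiplication scale); phi p q is the structure map M(p \<le> q).\<close>

definition linear_on :: "('k::field \<Rightarrow> 'v::ab_group_add \<Rightarrow> 'v) \<Rightarrow> ('k \<Rightarrow> 'w::ab_group_add \<Rightarrow> 'w)
    \<Rightarrow> 'v set \<Rightarrow> ('v \<Rightarrow> 'w) \<Rightarrow> bool" where
  "linear_on s1 s2 A f \<longleftrightarrow>
     (\<forall>u\<in>A. \<forall>w\<in>A. f (u + w) = f u + f w) \<and> (\<forall>c. \<forall>u\<in>A. f (s1 c u) = s2 c (f u))"

definition pmodule :: "('k::field \<Rightarrow> 'v::ab_group_add \<Rightarrow> 'v) \<Rightarrow> ('p::order \<Rightarrow> 'v set)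
    \<Rightarrow> ('p \<Rightarrow> 'p \<Rightarrow> 'v \<Rightarrow> 'v) \<Rightarrow> bool" where
  "pmodule s V phi \<longleftrightarrow>
     vector_space s \<and>
     (\<forall>p. module.subspace s (V p)) \<and>
     (\<forall>p q. p \<le> q \<longrightarrow> (\<forall>v\<in>V p. phi p q v \<in> V q) \<and> linear_on s s (V p) (phi p q)) \<and>
     (\<forall>p. \<forall>v\<in>V p. phi p p v = v) \<and>
     (\<forall>p q r. p \<le> q \<and> q \<le> r \<longrightarrow> (\<forall>v\<in>V p. phi q r (phi p q v) = phi p r v))"

definition pointwise_fin_dim :: "('k::field \<Rightarrow> 'v::ab_group_add \<Rightarrow> 'v) \<Rightarrow> ('p \<Rightarrow> 'v set) \<Rightarrow> bool" where
  "pointwise_fin_dim s V \<longleftrightarrow> (\<forall>p. \<exists>B. finite B \<and> B \<subseteq> V p \<and> module.span s B = V p)"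

definition middle_exact :: "('s::order \<times> 't::order \<Rightarrow> 'v::ab_group_add set)
    \<Rightarrow> ('s \<times> 't \<Rightarrow> 's \<times> 't \<Rightarrow> 'v \<Rightarrow> 'v) \<Rightarrow> bool" where
  "middle_exact V phi \<longleftrightarrow>
     (\<forall>x x' y y'. x \<le> x' \<and> y \<le> y' \<longrightarrow>
        (let a = (x, y); b = (x, y'); c = (x', y); d = (x', y') in
          {(u, w). u \<in> V b \<and> w \<in> V c \<and> phi b d u - phi c d w = 0}
          = {(phi a b v, phi a c v) | v. v \<in> V a}))"

definition submodule :: "('k::field \<Rightarrow> 'v::ab_group_add \<Rightarrow> 'v) \<Rightarrow> ('p::order \<Rightarrow> 'v set)
    \<Rightarrow> ('p \<Rightarrow> 'p \<Rightarrow> 'v \<Rightarrow> 'v) \<Rightarrow> ('p \<Rightarrow> 'v set) \<Rightarrow> bool" where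
  "submodule s V phi N \<longleftrightarrow>
     (\<forall>p. module.subspace s (N p) \<and> N p \<subseteq> V p) \<and>
     (\<forall>p q. p \<le> q \<longrightarrow> (\<forall>v\<in>N p. phi p q v \<in> N q))"

definition indecomposable :: "('k::field \<Rightarrow> 'v::ab_group_add \<Rightarrow> 'v) \<Rightarrow> ('p::order \<Rightarrow> 'v set)
    \<Rightarrow> ('p \<Rightarrow> 'p \<Rightarrow> 'v \<Rightarrow> 'v) \<Rightarrow> bool" where
  "indecomposable s V phi \<longleftrightarrow>
     (\<exists>p. V p \<noteq> {0}) \<and>
     (\<forall>N1 N2. submodule s V phi N1 \<and> submodule s V phi N2 \<and>
        (\<forall>p. N1 p \<inter> N2 p = {0} \<and> (\<forall>v\<in>V p. \<exists>u\<in>N1 p. \<exists>w\<in>N2 p. v = u + w))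
        \<longrightarrow> (\<forall>p. N1 p = {0}) \<or> (\<forall>p. N2 p = {0}))"

definition pmod_iso :: "('k::field \<Rightarrow> 'v::ab_group_add \<Rightarrow> 'v) \<Rightarrow> ('p::order \<Rightarrow> 'v set) \<Rightarrow> ('p \<Rightarrow> 'p \<Rightarrow> 'v \<Rightarrow> 'v)
    \<Rightarrow> ('k \<Rightarrow> 'w::ab_group_add \<Rightarrow> 'w) \<Rightarrow> ('p \<Rightarrow> 'w set) \<Rightarrow> ('p \<Rightarrow> 'p \<Rightarrow> 'w \<Rightarrow> 'w) \<Rightarrow> bool" where
  "pmod_iso s1 V phi s2 W psi \<longleftrightarrow>
     (\<exists>f. (\<forall>p. bij_betw (f p) (V p) (W p) \<and> linear_on s1 s2 (V p) (f p)) \<and>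
          (\<forall>p q. p \<le> q \<longrightarrow> (\<forall>v\<in>V p. f q (phi p q v) = psi p q (f p v))))"

definition kB_space :: "'p set \<Rightarrow> 'p \<Rightarrow> 'k::field set" where
  "kB_space B p = (if p \<in> B then UNIV else {0})"

definition kB_map :: "'p set \<Rightarrow> 'p \<Rightarrow> 'p \<Rightarrow> 'k::field \<Rightarrow> 'k" where
  "kB_map B p q = (\<lambda>x. if p \<in> B \<and> q \<in> B then x else 0)"

definition down_closed :: "'a::order set \<Rightarrow> bool" where
  "down_closed J \<longleftrightarrow> (\<forall>x\<in>J. \<forall>y. y \<le> x \<longrightarrow> y \<in> J)"

definition db_block :: "('s::order \<times> 't::order) set \<Rightarrow> bool" where
  "db_block B \<longleftrightarrow> (\<exists>JS JT. JS \<noteq> {} \<and> JT \<noteq> {} \<and> down_closed JS \<and> down_closed JT \<and> B = JS \<times> JT)"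

end

theory Submission
  imports Defs
begin

text \<open>Let K_s be the joint kernel of M(a \<le> b) and M(a \<le> (s, y)) in M_a. As M_a is
  finite-dimensional, among the nonzero K_s (s \<ge> x) there is a least one; a nonzero u in it lies in
  K_x' and in every nonzero K_s. Middle exactness then shows that the support of u above a is a
  product J_S \<times> J_T of down-closed sets. Lifting backwards through exact squares, the vectors of
  M_p that vanish outside J_S \<times> J_T and agree with u further up form a compatible family of
  nonempty finite-dimensional affine subspaces, which by a Mittag-Leffler argument has a global
  section f supported exactly on B = J_S \<times> J_T. The span of f is a copy of k_B; a maximal
  submodule meeting it trivially (Zorn) is a complement, and indecomposability forces that
  complement to vanish.\<close>

lemma Zorn_minimal:
  fixes F :: "'a::order set"
  assumes "F \<noteq> {}"
    and "\<And>C. C \<subseteq> F \<Longrightarrow> C \<noteq> {} \<Longrightarrow> \<forall>a\<in>C. \<forall>b\<in>C. a \<le> b \<or> b \<le> a \<Longrightarrow> \<exists>l\<in>F. \<forall>a\<in>C. l \<le> a"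
  shows "\<exists>m\<in>F. \<forall>a\<in>F. a \<le> m \<longrightarrow> a = m"
proof -
  have "\<exists>m\<in>F. \<forall>a\<in>F. m \<ge> a \<longrightarrow> a = m"
  proof (rule predicate_Zorn)
    show "partial_order_on F (relation_of (\<ge>) F)"
      by (rule partial_order_on_relation_ofI) auto
    fix C assume "C \<in> Chains (relation_of (\<ge>) F)"
    then have "C \<subseteq> F" "\<forall>a\<in>C. \<forall>b\<in>C. a \<le> b \<or> b \<le> a"
      unfolding Chains_def relation_of_def by auto
    then show "\<exists>u\<in>F. \<forall>a\<in>C. a \<ge> u"
      using assms by (cases "C = {}") auto
  qed
  then show ?thesis by blast
qed

lemma Zorn_maximal:
  fixes F :: "'a::order set"
  assumes "F \<noteq> {}"
    and "\<And>C. C \<subseteq> F \<Longrightarrow> C \<noteq> {} \<Longrightarrow> \<forall>a\<in>C. \<forall>b\<in>C. a \<le> b \<or> b \<le> a \<Longrightarrow> \<exists>u\<in>F. \<forall>a\<in>C. a \<le> u"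
  shows "\<exists>m\<in>F. \<forall>a\<in>F. m \<le> a \<longrightarrow> a = m"
proof (rule predicate_Zorn)
  show "partial_order_on F (relation_of (\<le>) F)"
    by (rule partial_order_on_relation_ofI) auto
  fix C assume "C \<in> Chains (relation_of (\<le>) F)"
  then have "C \<subseteq> F" "\<forall>a\<in>C. \<forall>b\<in>C. a \<le> b \<or> b \<le> a"
    unfolding Chains_def relation_of_def by auto
  then show "\<exists>u\<in>F. \<forall>a\<in>C. a \<le> u"
    using assms by (cases "C = {}") auto
qed

section \<open>Affine subspaces\<close>

context vector_space
begin

definition affine_subspace :: "'b set \<Rightarrow> bool" where
  "affine_subspace A \<longleftrightarrow> (\<exists>a U. subspace U \<and> A = (+) a ` U)"

definition direction :: "'b set \<Rightarrow> 'b set" where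
  "direction A = {b - c | b c. b \<in> A \<and> c \<in> A}"

lemma subspace_imp_affine_subspace: "subspace U \<Longrightarrow> affine_subspace U"
  unfolding affine_subspace_def by (rule exI[of _ 0]) auto

lemma direction_translate:
  assumes "subspace U"
  shows "direction ((+) a ` U) = U"
proof
  show "direction ((+) a ` U) \<subseteq> U"
    unfolding direction_def using subspace_diff[OF assms] by auto
  show "U \<subseteq> direction ((+) a ` U)"
  proof
    fix u assume "u \<in> U"
    then have "a + u \<in> (+) a ` U" "a + 0 \<in> (+) a ` U"
      using subspace_0[OF assms] by blast+
    then show "u \<in> direction ((+) a ` U)"
      unfolding direction_def by force
  qed
qed

lemma affine_subspace_nonempty: "affine_subspace A \<Longrightarrow> A \<noteq> {}"
  unfolding affine_subspace_def using subspace_0 by blast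

lemma subspace_direction: "affine_subspace A \<Longrightarrow> subspace (direction A)"
  unfolding affine_subspace_def using direction_translate by auto

lemma affine_subspace_translate_direction:
  assumes "affine_subspace A" "a \<in> A"
  shows "A = (+) a ` direction A"
proof -
  obtain b U where U: "subspace U" "A = (+) b ` U"
    using assms(1) unfolding affine_subspace_def by blast
  then obtain u0 where u0: "u0 \<in> U" "a = b + u0" using assms(2) by blast
  have "(+) b ` U = (+) a ` U"
  proof (intro equalityI subsetI)
    fix v assume "v \<in> (+) b ` U"
    then obtain u where "u \<in> U" "v = b + u" by blast
    then have "u - u0 \<in> U" "v = a + (u - u0)"
      using subspace_diff[OF U(1) _ u0(1)] u0(2) by (auto simp: algebra_simps)
    then show "v \<in> (+) a ` U" by blast
  next
    fix v assume "v \<in> (+) a ` U"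
    then obtain u where u: "u \<in> U" "v = a + u" by blast
    have "u0 + u \<in> U" using subspace_add[OF U(1) u0(1) u(1)] .
    moreover have "v = b + (u0 + u)" using u(2) u0(2) by (simp add: algebra_simps)
    ultimately show "v \<in> (+) b ` U" by blast
  qed
  then show ?thesis using U direction_translate by simp
qed

lemma direction_mono: "C \<subseteq> A \<Longrightarrow> direction C \<subseteq> direction A"
  unfolding direction_def by blast

lemma direction_subset_subspace: "A \<subseteq> S \<Longrightarrow> subspace S \<Longrightarrow> direction A \<subseteq> S"
  unfolding direction_def using subspace_diff by blast

lemma affine_subspace_eqI:
  assumes "affine_subspace A" "affine_subspace C" "C \<subseteq> A" "direction C = direction A"
  shows "C = A"
proof -
  obtain c where c: "c \<in> C" using affine_subspace_nonempty[OF assms(2)] by blast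
  have "C = (+) c ` direction C" using affine_subspace_translate_direction[OF assms(2) c] .
  also have "\<dots> = (+) c ` direction A" using assms(4) by simp
  also have "\<dots> = A" using affine_subspace_translate_direction[OF assms(1)] c assms(3) by auto
  finally show ?thesis .
qed

lemma subspace_eq_if_dim_le:
  assumes "subspace U" "U \<subseteq> U'" "U' \<subseteq> span W" "finite W" "dim U' \<le> dim U"
  shows "U = U'"
proof (rule ccontr)
  assume "U \<noteq> U'"
  then obtain a where a: "a \<in> U'" "a \<notin> U" using assms(2) by blast
  obtain B where B: "B \<subseteq> U" "independent B" "U \<subseteq> span B" "card B = dim U"
    using basis_exists by blast
  obtain C where C: "C \<subseteq> U'" "independent C" "U' \<subseteq> span C" "card C = dim U'"
    using basis_exists by blast
  have "B \<subseteq> span W" "C \<subseteq> span W" using B(1) C(1) assms(2,3) by auto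
  then have fin: "finite B" "finite C"
    using independent_span_bound[OF assms(4)] B(2) C(2) by auto
  have "span B \<subseteq> U" using span_minimal[OF B(1) assms(1)] .
  then have "a \<notin> span B" using a(2) by blast
  then have "independent (insert a B)" using independent_insertI B(2) by blast
  moreover have "insert a B \<subseteq> span C" using a(1) B(1) C(3) assms(2) by blast
  ultimately have "card (insert a B) \<le> card C"
    using independent_span_bound[OF fin(2)] by blast
  moreover have "a \<notin> B" using a(2) B(1) by blast
  then have "card (insert a B) = card B + 1" using fin(1) by simp
  ultimately show False using B(4) C(4) assms(5) by simp
qed

text \<open>Finite-dimensional affine subspaces satisfy the descending chain condition, since a strictly
  smaller affine subspace has a strictly smaller direction.\<close>
lemma directed_affine_family_has_least:
  assumes "finite W" "F \<noteq> {}"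
    and F: "\<And>A. A \<in> F \<Longrightarrow> affine_subspace A \<and> A \<subseteq> span W"
    and directed: "\<And>A B. A \<in> F \<Longrightarrow> B \<in> F \<Longrightarrow> \<exists>C\<in>F. C \<subseteq> A \<and> C \<subseteq> B"
  shows "\<exists>A0\<in>F. \<forall>A\<in>F. A0 \<subseteq> A"
proof -
  obtain A0 where A0: "A0 \<in> F" "\<And>A. A \<in> F \<Longrightarrow> dim (direction A0) \<le> dim (direction A)"
    using ex_has_least_nat[of "\<lambda>A. A \<in> F" _ "\<lambda>A. dim (direction A)"] assms(2) by blast
  have "A0 \<subseteq> A" if A: "A \<in> F" for A
  proof -
    obtain C where C: "C \<in> F" "C \<subseteq> A0" "C \<subseteq> A" using directed[OF A0(1) A] by blast
    have aff: "affine_subspace C" "affine_subspace A0" and "A0 \<subseteq> span W"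
      using F[OF C(1)] F[OF A0(1)] by auto
    then have "direction A0 \<subseteq> span W"
      using direction_subset_subspace by blast
    then have "direction C = direction A0"
      using subspace_eq_if_dim_le[OF subspace_direction[OF aff(1)] direction_mono[OF C(2)] _ assms(1)]
        A0(2)[OF C(1)] by blast
    then have "C = A0" using affine_subspace_eqI[OF aff(2,1) C(2)] by blast
    then show ?thesis using C(3) by blast
  qed
  then show ?thesis using A0(1) by blast
qed

lemma scale_in_span_singleton: "c *s x \<in> span {x}"
  using span_scale[OF span_base[OF singletonI]] .

lemma the_coordinate: "x \<noteq> 0 \<Longrightarrow> (THE c. a *s x = c *s x) = a"
  by (auto intro: the_equality)

lemma coordinate_span_singleton:
  assumes "x \<noteq> 0"
  shows "bij_betw (\<lambda>v. THE c. v = c *s x) (span {x}) UNIV"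
    and "linear_on scale (*) (span {x}) (\<lambda>v. THE c. v = c *s x)"
proof -
  have span: "span {x} = range (\<lambda>c. c *s x)" by (rule span_singleton)
  have "inj_on (\<lambda>v. THE c. v = c *s x) (span {x})"
    using the_coordinate[OF assms] by (auto simp: span inj_on_def)
  moreover have "(\<lambda>v. THE c. v = c *s x) ` span {x} = UNIV"
  proof -
    have "c = (THE c'. c *s x = c' *s x)" "c *s x \<in> span {x}" for c
      using the_coordinate[OF assms, of c] span by auto
    then show ?thesis by blast
  qed
  ultimately show "bij_betw (\<lambda>v. THE c. v = c *s x) (span {x}) UNIV" by (simp add: bij_betw_def)
  show "linear_on scale (*) (span {x}) (\<lambda>v. THE c. v = c *s x)"
    unfolding linear_on_def span using the_coordinate[OF assms]
    by (auto simp: scale_left_distrib[symmetric])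
qed

lemma subspace_common_kernel:
  assumes "subspace U" "\<And>i. i \<in> I \<Longrightarrow> linear_on scale scale U (f i)"
  shows "subspace {x \<in> U. \<forall>i\<in>I. f i x = 0}"
proof -
  have add: "f i (x + y) = f i x + f i y" and scale: "f i (c *s x) = c *s f i x"
    if "i \<in> I" "x \<in> U" "y \<in> U" for i x y c
    using assms(2)[OF that(1)] that(2,3) unfolding linear_on_def by blast+
  have "f i 0 = 0" if "i \<in> I" for i
    using add[OF that subspace_0[OF assms(1)] subspace_0[OF assms(1)]] by simp
  then show ?thesis
    using assms(1) add scale unfolding subspace_def by auto
qed

lemma subspace_kernel:
  assumes "subspace U" "linear_on scale scale U f"
  shows "subspace {x \<in> U. f x = 0}"
proof -
  have "{x \<in> U. f x = 0} = {x \<in> U. \<forall>i\<in>{()}. f x = 0}" by simp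
  moreover have "subspace {x \<in> U. \<forall>i\<in>{()}. (\<lambda>_. f) i x = 0}"
    by (rule subspace_common_kernel) (use assms in simp_all)
  ultimately show ?thesis by simp
qed

lemma subspace_image:
  assumes "subspace U" "linear_on scale scale U f"
  shows "subspace (f ` U)"
proof -
  have add: "f (x + y) = f x + f y" and scale: "f (c *s x) = c *s f x" if "x \<in> U" "y \<in> U" for x y c
    using assms(2) that unfolding linear_on_def by blast+
  have "f 0 = 0" using add[OF subspace_0[OF assms(1)] subspace_0[OF assms(1)]] by simp
  then have "0 \<in> f ` U" using subspace_0[OF assms(1)] by force
  moreover have "x + y \<in> f ` U" if xy: "x \<in> f ` U" "y \<in> f ` U" for x y
  proof -
    obtain u w where "u \<in> U" "w \<in> U" "x = f u" "y = f w" using xy by blast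
    then have "x + y = f (u + w)" "u + w \<in> U" using add subspace_add[OF assms(1)] by simp_all
    then show ?thesis by blast
  qed
  moreover have "c *s x \<in> f ` U" if x: "x \<in> f ` U" for c x
  proof -
    obtain u where "u \<in> U" "x = f u" using x by blast
    then have "c *s x = f (c *s u)" "c *s u \<in> U" using scale subspace_scale[OF assms(1)] by simp_all
    then show ?thesis by blast
  qed
  ultimately show ?thesis unfolding subspace_def by blast
qed

lemma affine_subspace_image:
  assumes A: "affine_subspace A" "A \<subseteq> S" and S: "subspace S" "linear_on scale scale S f"
  shows "affine_subspace (f ` A)"
proof -
  obtain a where a: "a \<in> A" using affine_subspace_nonempty[OF A(1)] by blast
  have dir: "direction A \<subseteq> S" using direction_subset_subspace[OF A(2) S(1)] .
  have lin: "linear_on scale scale (direction A) f"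
    using S(2) dir unfolding linear_on_def by blast
  have "f ` A = f ` ((+) a ` direction A)"
    using affine_subspace_translate_direction[OF A(1) a] by simp
  also have "\<dots> = (+) (f a) ` (f ` direction A)"
    using S(2) a A(2) dir unfolding linear_on_def image_image by (intro image_cong) auto
  finally show ?thesis
    using subspace_image[OF subspace_direction[OF A(1)] lin] unfolding affine_subspace_def by blast
qed

lemma affine_subspace_fibre:
  assumes A: "affine_subspace A" "A \<subseteq> S" "a \<in> A" and S: "subspace S" "linear_on scale scale S f"
  shows "affine_subspace {w \<in> A. f w = f a}"
proof -
  have dir: "direction A \<subseteq> S" using direction_subset_subspace[OF A(2) S(1)] .
  have lin: "linear_on scale scale (direction A) f"
    using S(2) dir unfolding linear_on_def by blast
  have add: "f (a + u) = f a + f u" if "u \<in> direction A" for u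
    using S(2) A(2,3) dir that unfolding linear_on_def by blast
  have "{w \<in> A. f w = f a} = (+) a ` {u \<in> direction A. f u = 0}"
  proof (intro equalityI subsetI)
    fix w assume w: "w \<in> {w \<in> A. f w = f a}"
    then obtain u where u: "u \<in> direction A" "w = a + u"
      using affine_subspace_translate_direction[OF A(1,3)] by blast
    then have "f u = 0" using w add by simp
    then show "w \<in> (+) a ` {u \<in> direction A. f u = 0}" using u by blast
  next
    fix w assume "w \<in> (+) a ` {u \<in> direction A. f u = 0}"
    then obtain u where u: "u \<in> direction A" "f u = 0" "w = a + u" by blast
    then have "w \<in> A" using affine_subspace_translate_direction[OF A(1,3)] by blast
    then show "w \<in> {w \<in> A. f w = f a}" using u add by simp
  qed
  with subspace_kernel[OF subspace_direction[OF A(1)] lin] show ?thesis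
    unfolding affine_subspace_def by (intro exI[of _ a] exI[of _ "{u \<in> direction A. f u = 0}"]) simp
qed

end

section \<open>Persistence modules\<close>

lemma linear_on_subset: "linear_on s1 s2 A f \<Longrightarrow> B \<subseteq> A \<Longrightarrow> linear_on s1 s2 B f"
  unfolding linear_on_def by blast

lemma pmoduleD:
  assumes "pmodule s V phi"
  shows "vector_space s" "module.subspace s (V p)"
    and "p \<le> q \<Longrightarrow> v \<in> V p \<Longrightarrow> phi p q v \<in> V q"
    and "p \<le> q \<Longrightarrow> linear_on s s (V p) (phi p q)"
    and "v \<in> V p \<Longrightarrow> phi p p v = v"
    and "p \<le> q \<Longrightarrow> q \<le> r \<Longrightarrow> v \<in> V p \<Longrightarrow> phi q r (phi p q v) = phi p r v"
  using assms unfolding pmodule_def by simp_all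

locale pmod =
  fixes scale :: "'k::field \<Rightarrow> 'v::ab_group_add \<Rightarrow> 'v"
    and V :: "'p::order \<Rightarrow> 'v set"
    and phi :: "'p \<Rightarrow> 'p \<Rightarrow> 'v \<Rightarrow> 'v"
  assumes pmodule: "pmodule scale V phi"
begin

sublocale vs: vector_space scale
  using pmoduleD(1)[OF pmodule] .

lemma subspace_V: "vs.subspace (V p)"
  using pmoduleD(2)[OF pmodule] .

lemma zero_in_V [simp]: "0 \<in> V p"
  using vs.subspace_0[OF subspace_V] .

lemma phi_in_V: "p \<le> q \<Longrightarrow> v \<in> V p \<Longrightarrow> phi p q v \<in> V q"
  using pmoduleD(3)[OF pmodule] .

lemma linear_on_phi: "p \<le> q \<Longrightarrow> linear_on scale scale (V p) (phi p q)"
  using pmoduleD(4)[OF pmodule] .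

lemma phi_add: "p \<le> q \<Longrightarrow> v \<in> V p \<Longrightarrow> w \<in> V p \<Longrightarrow> phi p q (v + w) = phi p q v + phi p q w"
  using linear_on_phi unfolding linear_on_def by blast

lemma phi_scale: "p \<le> q \<Longrightarrow> v \<in> V p \<Longrightarrow> phi p q (scale c v) = scale c (phi p q v)"
  using linear_on_phi unfolding linear_on_def by blast

lemma phi_zero [simp]: "p \<le> q \<Longrightarrow> phi p q 0 = 0"
  using phi_scale[of p q 0 0] by simp

lemma phi_diff: "p \<le> q \<Longrightarrow> v \<in> V p \<Longrightarrow> w \<in> V p \<Longrightarrow> phi p q (v - w) = phi p q v - phi p q w"
  using phi_add[of p q "v - w" w] vs.subspace_diff[OF subspace_V] by (simp add: algebra_simps)

lemma phi_id [simp]: "v \<in> V p \<Longrightarrow> phi p p v = v"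
  using pmoduleD(5)[OF pmodule] .

lemma phi_comp: "p \<le> q \<Longrightarrow> q \<le> r \<Longrightarrow> v \<in> V p \<Longrightarrow> phi q r (phi p q v) = phi p r v"
  using pmoduleD(6)[OF pmodule] .

lemma phi_nonzero_below: "p \<le> q \<Longrightarrow> q \<le> r \<Longrightarrow> v \<in> V p \<Longrightarrow> phi p r v \<noteq> 0 \<Longrightarrow> phi p q v \<noteq> 0"
  using phi_comp by fastforce

lemma down_closed_nonvanishing:
  fixes m :: "'a::order \<Rightarrow> 'p"
  assumes "v \<in> V a" "\<And>s. a \<le> m s" "mono m"
  shows "down_closed {s. phi a (m s) v \<noteq> 0}"
  unfolding down_closed_def using phi_nonzero_below[OF assms(2) monoD[OF assms(3)] assms(1)] by blast

definition global_section :: "('p \<Rightarrow> 'v) \<Rightarrow> bool" where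
  "global_section f \<longleftrightarrow> (\<forall>p. f p \<in> V p) \<and> (\<forall>p q. p \<le> q \<longrightarrow> phi p q (f p) = f q)"

lemma global_sectionD:
  assumes "global_section f"
  shows "f p \<in> V p" and "p \<le> q \<Longrightarrow> phi p q (f p) = f q"
  using assms unfolding global_section_def by simp_all

lemma phi_section_translate:
  assumes f: "global_section f" and "p \<le> s" "s \<le> t" "w \<in> V p"
  shows "phi s t (phi p s w - scale a (f s)) = phi p t w - scale a (f t)"
proof -
  have "phi p s w \<in> V s" "scale a (f s) \<in> V s"
    using phi_in_V assms vs.subspace_scale[OF subspace_V global_sectionD(1)[OF f]] by auto
  then show ?thesis
    using assms phi_diff phi_scale phi_comp global_sectionD[OF f] by simp
qed

subsection \<open>Splitting off the span of a global section\<close>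

lemma submoduleI:
  assumes "\<And>p. vs.subspace (N p)" "\<And>p. N p \<subseteq> V p"
    and "\<And>p q v. p \<le> q \<Longrightarrow> v \<in> N p \<Longrightarrow> phi p q v \<in> N q"
  shows "submodule scale V phi N"
  using assms unfolding submodule_def by blast

lemma submoduleD:
  assumes "submodule scale V phi N"
  shows "vs.subspace (N p)" "N p \<subseteq> V p" "p \<le> q \<Longrightarrow> v \<in> N p \<Longrightarrow> phi p q v \<in> N q"
  using assms unfolding submodule_def by simp_all

lemma submodule_span_section:
  assumes f: "global_section f"
  shows "submodule scale V phi (\<lambda>p. vs.span {f p})"
proof (rule submoduleI)
  show "vs.subspace (vs.span {f p})" for p by simp
  show "vs.span {f p} \<subseteq> V p" for p
    using vs.span_minimal[OF _ subspace_V] global_sectionD(1)[OF f] by blast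
  fix p q v assume "p \<le> q" "v \<in> vs.span {f p}"
  then obtain c where "v = scale c (f p)" by (auto simp: vs.span_singleton)
  then show "phi p q v \<in> vs.span {f q}"
    using \<open>p \<le> q\<close> phi_scale global_sectionD[OF f] vs.scale_in_span_singleton by simp
qed

lemma submodule_chain_Union:
  assumes "C \<noteq> {}" and sub: "\<And>N. N \<in> C \<Longrightarrow> submodule scale V phi N"
    and chain: "\<forall>N\<in>C. \<forall>N'\<in>C. N \<le> N' \<or> N' \<le> N"
  shows "submodule scale V phi (\<lambda>p. \<Union>N\<in>C. N p)"
proof (rule submoduleI)
  fix p
  show "vs.subspace (\<Union>N\<in>C. N p)"
    unfolding vs.subspace_def
  proof (intro conjI ballI allI)
    show "0 \<in> (\<Union>N\<in>C. N p)"
      using assms(1) vs.subspace_0[OF submoduleD(1)[OF sub]] by blast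
    fix v w assume "v \<in> (\<Union>N\<in>C. N p)" "w \<in> (\<Union>N\<in>C. N p)"
    then obtain N N' where N: "N \<in> C" "v \<in> N p" "N' \<in> C" "w \<in> N' p" by blast
    then have "v \<in> N' p \<and> w \<in> N' p \<or> v \<in> N p \<and> w \<in> N p"
      using chain unfolding le_fun_def by blast
    then show "v + w \<in> (\<Union>N\<in>C. N p)"
      using vs.subspace_add[OF submoduleD(1)[OF sub]] N by blast
  next
    fix c v assume "v \<in> (\<Union>N\<in>C. N p)"
    then show "scale c v \<in> (\<Union>N\<in>C. N p)"
      using vs.subspace_scale[OF submoduleD(1)[OF sub]] by blast
  qed
  show "(\<Union>N\<in>C. N p) \<subseteq> V p" using submoduleD(2)[OF sub] by blast
next
  fix p q v assume "p \<le> q" "v \<in> (\<Union>N\<in>C. N p)"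
  then show "phi p q v \<in> (\<Union>N\<in>C. N q)" using submoduleD(3)[OF sub] by blast
qed

definition adjoin :: "('p \<Rightarrow> 'v set) \<Rightarrow> 'p \<Rightarrow> 'v \<Rightarrow> 'p \<Rightarrow> 'v set" where
  "adjoin N p w q = (if p \<le> q then {n + m | n m. n \<in> N q \<and> m \<in> vs.span {phi p q w}} else N q)"

lemma adjoin_superset: "N q \<subseteq> adjoin N p w q"
proof
  fix n assume n: "n \<in> N q"
  have "n + 0 \<in> {n + m | n m. n \<in> N q \<and> m \<in> vs.span {phi p q w}}"
    using n vs.span_zero by blast
  then show "n \<in> adjoin N p w q" using n unfolding adjoin_def by simp
qed

lemma in_adjoin:
  assumes "submodule scale V phi N" "w \<in> V p"
  shows "w \<in> adjoin N p w p"
proof -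
  have "0 \<in> N p" "w \<in> vs.span {phi p p w}"
    using vs.subspace_0[OF submoduleD(1)[OF assms(1)]] vs.span_base[of w "{w}"] assms(2) by auto
  then have "0 + w \<in> {n + m | n m. n \<in> N p \<and> m \<in> vs.span {phi p p w}}" by blast
  then show ?thesis unfolding adjoin_def by simp
qed

lemma submodule_adjoin:
  assumes N: "submodule scale V phi N" and w: "w \<in> V p"
  shows "submodule scale V phi (adjoin N p w)"
proof (rule submoduleI)
  fix q
  show "vs.subspace (adjoin N p w q)"
    unfolding adjoin_def using vs.subspace_sums[OF submoduleD(1)[OF N] vs.subspace_span] submoduleD(1)[OF N]
    by simp
  show "adjoin N p w q \<subseteq> V q"
  proof (cases "p \<le> q")
    case True
    have "vs.span {phi p q w} \<subseteq> V q"
      using vs.span_minimal[OF _ subspace_V] phi_in_V[OF True w] by blast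
    then have "n + m \<in> V q" if "n \<in> N q" "m \<in> vs.span {phi p q w}" for n m
      using that submoduleD(2)[OF N] vs.subspace_add[OF subspace_V] by blast
    then show ?thesis unfolding adjoin_def using True by auto
  next
    case False
    then show ?thesis unfolding adjoin_def using submoduleD(2)[OF N] by simp
  qed
next
  fix q q' v assume qq': "q \<le> q'" and v: "v \<in> adjoin N p w q"
  show "phi q q' v \<in> adjoin N p w q'"
  proof (cases "p \<le> q")
    case False
    then have "v \<in> N q" using v unfolding adjoin_def by simp
    then show ?thesis using submoduleD(3)[OF N qq'] adjoin_superset by blast
  next
    case True
    then obtain n c where nc: "v = n + scale c (phi p q w)" "n \<in> N q"
      using v unfolding adjoin_def by (auto simp: vs.span_singleton)
    have nV: "n \<in> V q" and wq: "phi p q w \<in> V q"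
      using nc(2) submoduleD(2)[OF N] phi_in_V[OF True w] by auto
    have "phi q q' v = phi q q' n + phi q q' (scale c (phi p q w))"
      using phi_add[OF qq' nV vs.subspace_scale[OF subspace_V wq]] nc(1) by simp
    also have "\<dots> = phi q q' n + scale c (phi p q' w)"
      using phi_scale[OF qq' wq] phi_comp[OF True qq' w] by simp
    finally have "phi q q' v = phi q q' n + scale c (phi p q' w)" .
    moreover have "phi q q' n \<in> N q'" using submoduleD(3)[OF N qq' nc(2)] .
    moreover have "scale c (phi p q' w) \<in> vs.span {phi p q' w}" by (rule vs.scale_in_span_singleton)
    moreover have "p \<le> q'" using True qq' by (rule order_trans)
    ultimately show ?thesis unfolding adjoin_def by auto
  qed
qed

lemma adjoin_inter_span:
  assumes N: "submodule scale V phi N"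
    and disjoint: "\<And>q. N q \<inter> vs.span {f q} = {0}"
    and transversal: "\<And>q c. p \<le> q \<Longrightarrow> phi p q w - scale c (f q) \<in> N q \<Longrightarrow> scale c (f q) = 0"
  shows "adjoin N p w q \<inter> vs.span {f q} = {0}"
proof -
  have "x = 0" if x: "x \<in> adjoin N p w q" "x \<in> vs.span {f q}" for x
  proof -
    obtain e where e: "x = scale e (f q)" using x(2) by (auto simp: vs.span_singleton)
    show ?thesis
    proof (cases "p \<le> q")
      case False
      then show ?thesis using x disjoint unfolding adjoin_def by auto
    next
      case True
      then obtain n d where nd: "x = n + scale d (phi p q w)" "n \<in> N q"
        using x(1) unfolding adjoin_def by (auto simp: vs.span_singleton)
      show ?thesis
      proof (cases "d = 0")
        case True
        then show ?thesis using nd x(2) disjoint by auto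
      next
        case False
        have "scale d (phi p q w) = x - n" using nd(1) by simp
        then have "phi p q w = scale (inverse d) (x - n)"
          using False by (metis vs.scale_one vs.scale_scale left_inverse)
        then have "phi p q w - scale (inverse d * e) (f q) = scale (inverse d) (- n)"
          using e by (simp add: vs.scale_right_diff_distrib)
        moreover have "scale (inverse d) (- n) \<in> N q"
          using vs.subspace_scale[OF submoduleD(1)[OF N] vs.subspace_neg[OF submoduleD(1)[OF N] nd(2)]] .
        ultimately have "phi p q w - scale (inverse d * e) (f q) \<in> N q" by simp
        then have "scale (inverse d * e) (f q) = 0" by (rule transversal[OF True])
        then show ?thesis using e False by simp
      qed
    qed
  qed
  moreover have "0 \<in> adjoin N p w q"
    using adjoin_superset vs.subspace_0[OF submoduleD(1)[OF N]] by blast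
  ultimately show ?thesis using vs.span_zero by blast
qed

text \<open>Translate w by a multiple of f so that, if possible, it lies in N q0 at some q0 with
  f q0 \<noteq> 0. Any other hit of span f modulo N at q, pushed together with that one to a common upper
  bound r with f r \<noteq> 0, would put a nonzero multiple of f r into N r.\<close>
lemma exists_disjoint_translate:
  assumes N: "submodule scale V phi N" and f: "global_section f"
    and disjoint: "\<And>q. N q \<inter> vs.span {f q} = {0}"
    and directed: "\<And>q q'. f q \<noteq> 0 \<Longrightarrow> f q' \<noteq> 0 \<Longrightarrow> \<exists>r. q \<le> r \<and> q' \<le> r \<and> f r \<noteq> 0"
    and w: "w \<in> V p"
  shows "\<exists>c0. \<forall>q c. p \<le> q \<longrightarrow> phi p q (w - scale c0 (f p)) - scale c (f q) \<in> N q \<longrightarrow> scale c (f q) = 0"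
proof (cases "\<exists>q0 c0. p \<le> q0 \<and> f q0 \<noteq> 0 \<and> phi p q0 w - scale c0 (f q0) \<in> N q0")
  case False
  then show ?thesis by (intro exI[of _ 0]) auto
next
  case True
  then obtain q0 c0 where q0: "p \<le> q0" "f q0 \<noteq> 0" "phi p q0 w - scale c0 (f q0) \<in> N q0" by blast
  have translate: "phi p q (w - scale a (f p)) = phi p q w - scale a (f q)" if "p \<le> q" for q a
    using phi_section_translate[OF f order_refl that w] w by simp
  show ?thesis
  proof (intro exI[of _ c0] allI impI)
    fix q c assume pq: "p \<le> q" and inN: "phi p q (w - scale c0 (f p)) - scale c (f q) \<in> N q"
    show "scale c (f q) = 0"
    proof (rule ccontr)
      assume nz: "scale c (f q) \<noteq> 0"
      then obtain r where r: "q \<le> r" "q0 \<le> r" "f r \<noteq> 0" using directed[OF _ q0(2)] by fastforce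
      have "phi p q w - scale (c0 + c) (f q) \<in> N q"
        using inN translate[OF pq] by (simp add: vs.scale_left_distrib algebra_simps)
      then have A: "phi p r w - scale (c0 + c) (f r) \<in> N r"
        using submoduleD(3)[OF N r(1)] phi_section_translate[OF f pq r(1) w] by metis
      have B: "phi p r w - scale c0 (f r) \<in> N r"
        using submoduleD(3)[OF N r(2) q0(3)] phi_section_translate[OF f q0(1) r(2) w] by metis
      have "scale c (f r) = (phi p r w - scale c0 (f r)) - (phi p r w - scale (c0 + c) (f r))"
        by (simp add: vs.scale_left_distrib algebra_simps)
      then have "scale c (f r) \<in> N r" using vs.subspace_diff[OF submoduleD(1)[OF N] B A] by simp
      moreover have "scale c (f r) \<in> vs.span {f r}" by (rule vs.scale_in_span_singleton)
      ultimately have "scale c (f r) = 0" using disjoint by blast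
      then show False using nz r(3) by simp
    qed
  qed
qed

lemma maximal_complement_exists:
  assumes f: "global_section f"
  obtains N where "submodule scale V phi N" "\<And>q. N q \<inter> vs.span {f q} = {0}"
    "\<And>N'. submodule scale V phi N' \<Longrightarrow> (\<And>q. N' q \<inter> vs.span {f q} = {0}) \<Longrightarrow> N \<le> N' \<Longrightarrow> N' = N"
proof -
  define F where "F = {N. submodule scale V phi N \<and> (\<forall>q. N q \<inter> vs.span {f q} = {0})}"
  have "\<exists>N\<in>F. \<forall>N'\<in>F. N \<le> N' \<longrightarrow> N' = N"
  proof (rule Zorn_maximal)
    have "submodule scale V phi (\<lambda>_. {0})" by (rule submoduleI) auto
    then show "F \<noteq> {}" unfolding F_def using vs.span_zero by blast
    fix C assume C: "C \<subseteq> F" "C \<noteq> {}" "\<forall>a\<in>C. \<forall>b\<in>C. a \<le> b \<or> b \<le> a"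
    have "submodule scale V phi (\<lambda>p. \<Union>N\<in>C. N p)"
      using submodule_chain_Union[OF C(2) _ C(3)] C(1) unfolding F_def by blast
    moreover have "(\<Union>N\<in>C. N q) \<inter> vs.span {f q} = {0}" for q
      using C(1,2) unfolding F_def by blast
    moreover have "\<forall>N\<in>C. N \<le> (\<lambda>p. \<Union>N\<in>C. N p)" unfolding le_fun_def by blast
    ultimately show "\<exists>u\<in>F. \<forall>a\<in>C. a \<le> u" unfolding F_def by blast
  qed
  then obtain N where N: "N \<in> F" and maximal: "\<forall>N'\<in>F. N \<le> N' \<longrightarrow> N' = N" by blast
  show ?thesis
  proof (rule that)
    show "submodule scale V phi N" "N q \<inter> vs.span {f q} = {0}" for q
      using N unfolding F_def by blast+
    show "N' = N" if "submodule scale V phi N'" "\<And>q. N' q \<inter> vs.span {f q} = {0}" "N \<le> N'" for N'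
      using maximal that unfolding F_def by blast
  qed
qed

lemma maximal_complement_sum:
  assumes f: "global_section f"
    and directed: "\<And>q q'. f q \<noteq> 0 \<Longrightarrow> f q' \<noteq> 0 \<Longrightarrow> \<exists>r. q \<le> r \<and> q' \<le> r \<and> f r \<noteq> 0"
    and N: "submodule scale V phi N" and disjoint: "\<And>q. N q \<inter> vs.span {f q} = {0}"
    and maximal: "\<And>N'. submodule scale V phi N' \<Longrightarrow> (\<And>q. N' q \<inter> vs.span {f q} = {0}) \<Longrightarrow> N \<le> N' \<Longrightarrow> N' = N"
    and w: "w \<in> V p"
  shows "\<exists>c. w - scale c (f p) \<in> N p"
proof -
  obtain c0 where transversal:
    "\<And>q c. p \<le> q \<Longrightarrow> phi p q (w - scale c0 (f p)) - scale c (f q) \<in> N q \<Longrightarrow> scale c (f q) = 0"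
    using exists_disjoint_translate[OF N f disjoint directed w] by blast
  define w' where "w' = w - scale c0 (f p)"
  have w': "w' \<in> V p"
    unfolding w'_def using w vs.subspace_diff[OF subspace_V] vs.subspace_scale[OF subspace_V]
      global_sectionD(1)[OF f] by blast
  have "adjoin N p w' = N"
    using maximal[OF submodule_adjoin[OF N w'] adjoin_inter_span[OF N disjoint transversal[folded w'_def]]]
    by (simp add: le_fun_def adjoin_superset)
  then have "w' \<in> N p" using in_adjoin[OF N w'] by simp
  then show ?thesis unfolding w'_def by blast
qed

text \<open>A maximal submodule meeting the span of f trivially is a complement of it, so
  indecomposability forces it to vanish.\<close>
theorem indecomposable_spanned_by_section:
  assumes ind: "indecomposable scale V phi" and f: "global_section f" and "f p0 \<noteq> 0"
    and directed: "\<And>q q'. f q \<noteq> 0 \<Longrightarrow> f q' \<noteq> 0 \<Longrightarrow> \<exists>r. q \<le> r \<and> q' \<le> r \<and> f r \<noteq> 0"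
  shows "V p = vs.span {f p}"
proof -
  obtain N where N: "submodule scale V phi N" and disjoint: "\<And>q. N q \<inter> vs.span {f q} = {0}"
    and maximal: "\<And>N'. submodule scale V phi N' \<Longrightarrow> (\<And>q. N' q \<inter> vs.span {f q} = {0}) \<Longrightarrow> N \<le> N' \<Longrightarrow> N' = N"
    using maximal_complement_exists[OF f] by blast
  have sum: "\<exists>c. w - scale c (f q) \<in> N q" if "w \<in> V q" for q w
    using maximal_complement_sum[OF f directed N disjoint maximal that] .
  have "\<forall>q. vs.span {f q} \<inter> N q = {0} \<and> (\<forall>v\<in>V q. \<exists>u\<in>vs.span {f q}. \<exists>n\<in>N q. v = u + n)"
  proof (intro allI conjI ballI)
    fix q show "vs.span {f q} \<inter> N q = {0}" using disjoint by blast
    fix v assume "v \<in> V q"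
    then obtain c where "v - scale c (f q) \<in> N q" using sum by blast
    moreover have "scale c (f q) \<in> vs.span {f q}" by (rule vs.scale_in_span_singleton)
    moreover have "v = scale c (f q) + (v - scale c (f q))" by simp
    ultimately show "\<exists>u\<in>vs.span {f q}. \<exists>n\<in>N q. v = u + n" by blast
  qed
  then have "(\<forall>q. vs.span {f q} = {0}) \<or> (\<forall>q. N q = {0})"
    using ind submodule_span_section[OF f] N unfolding indecomposable_def by blast
  moreover have "f p0 \<in> vs.span {f p0}" by (simp add: vs.span_base)
  ultimately have N0: "N q = {0}" for q using \<open>f p0 \<noteq> 0\<close> by blast
  show ?thesis
  proof
    show "V p \<subseteq> vs.span {f p}"
    proof
      fix v assume "v \<in> V p"
      then obtain c where "v - scale c (f p) \<in> N p" using sum by blast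
      then have "v = scale c (f p)" using N0 by simp
      then show "v \<in> vs.span {f p}" by (simp add: vs.scale_in_span_singleton)
    qed
    show "vs.span {f p} \<subseteq> V p"
      using vs.span_minimal[OF _ subspace_V] global_sectionD(1)[OF f] by blast
  qed
qed

theorem pmod_iso_kB_if_spanned:
  assumes f: "global_section f" and span: "\<And>p. V p = vs.span {f p}"
  shows "pmod_iso scale V phi ((*) :: 'k \<Rightarrow> 'k \<Rightarrow> 'k) (kB_space {p. f p \<noteq> 0}) (kB_map {p. f p \<noteq> 0})"
proof -
  define D where "D = {p. f p \<noteq> 0}"
  define g where "g p = (if f p = 0 then (\<lambda>_. 0) else (\<lambda>v. THE c. v = scale c (f p)))" for p
  have V_zero: "V p = {0}" if "f p = 0" for p
    using span[of p] that by (simp add: vs.span_singleton)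
  have "bij_betw (g p) (V p) (kB_space D p) \<and> linear_on scale (*) (V p) (g p)" for p
  proof (cases "f p = 0")
    case True
    then show ?thesis using V_zero by (simp add: g_def D_def kB_space_def bij_betw_def linear_on_def)
  next
    case False
    then show ?thesis
      using vs.coordinate_span_singleton[OF False] span[of p] by (simp add: g_def D_def kB_space_def)
  qed
  moreover have "g q (phi p q v) = kB_map D p q (g p v)" if pq: "p \<le> q" and v: "v \<in> V p" for p q v
  proof -
    obtain c where c: "v = scale c (f p)" using v span[of p] by (auto simp: vs.span_singleton)
    have "phi p q v = scale c (f q)"
      using c phi_scale[OF pq global_sectionD(1)[OF f]] global_sectionD(2)[OF f pq] by simp
    moreover have "f p \<noteq> 0" if "f q \<noteq> 0"
      using that global_sectionD(2)[OF f \<open>p \<le> q\<close>] \<open>p \<le> q\<close> by auto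
    ultimately show ?thesis
      using c vs.the_coordinate by (cases "f q = 0") (simp_all add: g_def kB_map_def D_def)
  qed
  ultimately show ?thesis
    unfolding pmod_iso_def D_def[symmetric] by blast
qed

subsection \<open>Exact squares and affine systems\<close>

definition exact_square :: "'p \<Rightarrow> 'p \<Rightarrow> 'p \<Rightarrow> 'p \<Rightarrow> bool" where
  "exact_square a b c d \<longleftrightarrow> a \<le> b \<and> a \<le> c \<and> b \<le> d \<and> c \<le> d \<and>
     (\<forall>u\<in>V b. \<forall>w\<in>V c. phi b d u = phi c d w \<longrightarrow> (\<exists>z\<in>V a. phi a b z = u \<and> phi a c z = w))"

lemma exact_square_swap: "exact_square a b c d \<Longrightarrow> exact_square a c b d"
  unfolding exact_square_def by metis

definition vanishing_outside :: "'p set \<Rightarrow> 'p \<Rightarrow> 'v set" where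
  "vanishing_outside D p = {w \<in> V p. \<forall>q. p \<le> q \<longrightarrow> q \<notin> D \<longrightarrow> phi p q w = 0}"

lemma subspace_vanishing_outside: "vs.subspace (vanishing_outside D p)"
proof -
  have "vs.subspace {w \<in> V p. \<forall>q\<in>{q. p \<le> q \<and> q \<notin> D}. phi p q w = 0}"
    by (rule vs.subspace_common_kernel[OF subspace_V]) (simp add: linear_on_phi)
  moreover have "vanishing_outside D p = {w \<in> V p. \<forall>q\<in>{q. p \<le> q \<and> q \<notin> D}. phi p q w = 0}"
    unfolding vanishing_outside_def by auto
  ultimately show ?thesis by simp
qed

lemma vanishing_outside_subset_V: "vanishing_outside D p \<subseteq> V p"
  unfolding vanishing_outside_def by blast

lemma phi_vanishing_outside:
  assumes "p \<le> q" "w \<in> vanishing_outside D p"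
  shows "phi p q w \<in> vanishing_outside D q"
proof -
  have wV: "w \<in> V p" using assms(2) vanishing_outside_subset_V by blast
  have "phi q r (phi p q w) = 0" if "q \<le> r" "r \<notin> D" for r
    using phi_comp[OF assms(1) that(1) wV] assms order_trans[OF assms(1) that(1)] that(2)
    unfolding vanishing_outside_def by simp
  then show ?thesis using phi_in_V[OF assms(1) wV] unfolding vanishing_outside_def by blast
qed

lemma affine_subspace_phi_image:
  assumes "vs.affine_subspace A" "A \<subseteq> V r" "r \<le> p"
  shows "vs.affine_subspace (phi r p ` A)" and "phi r p ` A \<subseteq> V p"
  using vs.affine_subspace_image[OF assms(1,2) subspace_V linear_on_phi[OF assms(3)]]
    phi_in_V[OF assms(3)] assms(2) by blast+

lemma phi_image_shrink:
  assumes "r \<le> r'" "r' \<le> p" "F \<subseteq> V r" "phi r r' ` F \<subseteq> F'"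
  shows "phi r p ` F \<subseteq> phi r' p ` F'"
proof
  fix x assume "x \<in> phi r p ` F"
  then obtain w where w: "w \<in> F" "x = phi r p w" by blast
  then have "x = phi r' p (phi r r' w)" using phi_comp[OF assms(1,2)] assms(3) by auto
  moreover have "phi r r' w \<in> F'" using assms(4) w(1) by blast
  ultimately show "x \<in> phi r' p ` F'" by blast
qed

definition affine_system :: "('p \<Rightarrow> 'v set) \<Rightarrow> bool" where
  "affine_system A \<longleftrightarrow> (\<forall>p. vs.affine_subspace (A p) \<and> A p \<subseteq> V p) \<and>
     (\<forall>p q. p \<le> q \<longrightarrow> phi p q ` A p \<subseteq> A q)"

lemma affine_systemI:
  assumes "\<And>p. vs.affine_subspace (A p)" "\<And>p. A p \<subseteq> V p" "\<And>p q. p \<le> q \<Longrightarrow> phi p q ` A p \<subseteq> A q"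
  shows "affine_system A"
  using assms unfolding affine_system_def by blast

lemma affine_systemD:
  assumes "affine_system A"
  shows "vs.affine_subspace (A p)" "A p \<subseteq> V p" "p \<le> q \<Longrightarrow> phi p q ` A p \<subseteq> A q"
  using assms unfolding affine_system_def by simp_all

lemma phi_agreement_propagates:
  assumes "p \<le> q" "p \<le> j" "q \<le> k" "a \<le> j" "j \<le> k" "w \<in> V p" "u \<in> V a"
    and "phi p j w = phi a j u"
  shows "phi q k (phi p q w) = phi a k u"
proof -
  have "phi q k (phi p q w) = phi j k (phi p j w)"
    using phi_comp[OF assms(1,3,6)] phi_comp[OF assms(2,5,6)] by simp
  then show ?thesis using assms(8) phi_comp[OF assms(4,5,7)] by simp
qed

lemma affine_system_vanishing_fibres:
  assumes D: "\<And>p q. p \<le> q \<Longrightarrow> q \<in> D \<Longrightarrow> p \<in> D"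
    and j: "\<And>p. p \<le> j p" "\<And>p. a \<le> j p" "\<And>p q. p \<le> q \<Longrightarrow> j p \<le> j q"
    and u: "u \<in> vanishing_outside D a"
    and lift: "\<And>p. p \<in> D \<Longrightarrow> \<exists>w\<in>vanishing_outside D p. phi p (j p) w = phi a (j p) u"
  shows "affine_system
    (\<lambda>p. if p \<in> D then {w \<in> vanishing_outside D p. phi p (j p) w = phi a (j p) u} else {0})"
proof -
  define A where "A p = (if p \<in> D then {w \<in> vanishing_outside D p. phi p (j p) w = phi a (j p) u}
    else {0})" for p
  have "affine_system A"
  proof (rule affine_systemI)
    fix p
    show "vs.affine_subspace (A p)"
    proof (cases "p \<in> D")
      case True
      obtain w0 where w0: "w0 \<in> vanishing_outside D p" "phi p (j p) w0 = phi a (j p) u"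
        using lift[OF True] by blast
      have "A p = {w \<in> vanishing_outside D p. phi p (j p) w = phi p (j p) w0}"
        unfolding A_def using True w0(2) by simp
      then show ?thesis
        using vs.affine_subspace_fibre[OF vs.subspace_imp_affine_subspace[OF subspace_vanishing_outside]
            vanishing_outside_subset_V w0(1) subspace_V linear_on_phi[OF j(1)]] by simp
    qed (simp add: A_def vs.subspace_imp_affine_subspace)
    show "A p \<subseteq> V p" unfolding A_def using vanishing_outside_subset_V[of D p] by auto
  next
    fix p q :: 'p assume pq: "p \<le> q"
    have "phi p q w \<in> A q" if w: "w \<in> A p" for w
    proof (cases "p \<in> D \<and> q \<in> D")
      case True
      then have wX: "w \<in> vanishing_outside D p" and "phi p (j p) w = phi a (j p) u"
        using w unfolding A_def by simp_all
      then have "phi q (j q) (phi p q w) = phi a (j q) u"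
        using phi_agreement_propagates[OF pq j(1,1,2) j(3)[OF pq]] vanishing_outside_subset_V
          u vanishing_outside_subset_V by blast
      then show ?thesis using True phi_vanishing_outside[OF pq wX] unfolding A_def by simp
    next
      case False
      then have "q \<notin> D" using D pq by blast
      moreover have "phi p q w = 0"
        using w pq \<open>q \<notin> D\<close> unfolding A_def vanishing_outside_def by (auto split: if_splits)
      ultimately show ?thesis unfolding A_def by simp
    qed
    then show "phi p q ` A p \<subseteq> A q" by blast
  qed
  then show ?thesis by (simp only: A_def[abs_def])
qed

lemma stable_images_compatible:
  assumes codirected: "\<And>p q. \<exists>r::'p. r \<le> p \<and> r \<le> q"
    and I: "\<And>r r'. r' \<le> r \<Longrightarrow> r \<in> I \<Longrightarrow> r' \<in> I"
    and F: "\<And>r. r \<in> I \<Longrightarrow> F r \<subseteq> V r" "\<And>r r'. r \<le> r' \<Longrightarrow> r' \<in> I \<Longrightarrow> phi r r' ` F r \<subseteq> F r'"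
    and pq: "p \<le> q"
  shows "phi p q ` (\<Inter>r\<in>{r\<in>I. r \<le> p}. phi r p ` F r) \<subseteq> (\<Inter>r\<in>{r\<in>I. r \<le> q}. phi r q ` F r)"
proof (intro subsetI INT_I)
  fix x r assume x: "x \<in> phi p q ` (\<Inter>r\<in>{r\<in>I. r \<le> p}. phi r p ` F r)" and r: "r \<in> {r\<in>I. r \<le> q}"
  obtain w where w: "w \<in> (\<Inter>r\<in>{r\<in>I. r \<le> p}. phi r p ` F r)" "x = phi p q w" using x by blast
  obtain r' where r': "r' \<le> r" "r' \<le> p" using codirected by blast
  then have "r' \<in> I" using I r by blast
  then obtain w0 where w0: "w0 \<in> F r'" "w = phi r' p w0" using w(1) r'(2) by blast
  then have "x = phi r' q w0" using w(2) phi_comp[OF r'(2) pq] F(1)[OF \<open>r' \<in> I\<close>] by auto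
  then show "x \<in> phi r q ` F r"
    using phi_image_shrink[OF r'(1) _ F(1)[OF \<open>r' \<in> I\<close>] F(2)[OF r'(1)]] r w0(1) by blast
qed

end

section \<open>Mittag-Leffler for pointwise finite-dimensional modules\<close>

locale pfd_pmod = pmod scale V phi
  for scale :: "'k::field \<Rightarrow> 'v::ab_group_add \<Rightarrow> 'v"
    and V :: "'p::order \<Rightarrow> 'v set"
    and phi :: "'p \<Rightarrow> 'p \<Rightarrow> 'v \<Rightarrow> 'v" +
  assumes pfd: "pointwise_fin_dim scale V"
begin

lemma directed_affine_family_Inter:
  assumes "F \<noteq> {}" "\<And>A. A \<in> F \<Longrightarrow> vs.affine_subspace A \<and> A \<subseteq> V p"
    and "\<And>A B. A \<in> F \<Longrightarrow> B \<in> F \<Longrightarrow> \<exists>C\<in>F. C \<subseteq> A \<and> C \<subseteq> B"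
  shows "\<Inter>F \<in> F"
proof -
  obtain W where W: "finite W" "vs.span W = V p"
    using pfd[unfolded pointwise_fin_dim_def, rule_format, of p] by blast
  have "vs.affine_subspace A \<and> A \<subseteq> vs.span W" if "A \<in> F" for A
    using assms(2)[OF that] W(2) by simp
  then obtain A0 where "A0 \<in> F" "\<forall>A\<in>F. A0 \<subseteq> A"
    using vs.directed_affine_family_has_least[OF W(1) assms(1) _ assms(3)] by blast
  then have "\<Inter>F = A0" by blast
  then show ?thesis using \<open>A0 \<in> F\<close> by simp
qed

lemma kernel_chain_has_least:
  assumes U: "vs.subspace U" "U \<subseteq> V p" and Q: "Q \<noteq> {}" "\<And>q. q \<in> Q \<Longrightarrow> p \<le> q"
    and chain: "\<And>q q'. q \<in> Q \<Longrightarrow> q' \<in> Q \<Longrightarrow> q \<le> q' \<or> q' \<le> q"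
  shows "\<exists>q0\<in>Q. \<forall>q\<in>Q. {u \<in> U. phi p q0 u = 0} \<subseteq> {u \<in> U. phi p q u = 0}"
proof -
  define K where "K q = {u \<in> U. phi p q u = 0}" for q
  have mono: "K q \<subseteq> K q'" if "p \<le> q" "q \<le> q'" for q q'
    unfolding K_def using U(2) phi_comp[OF that] that by fastforce
  have "\<Inter>(K ` Q) \<in> K ` Q"
  proof (rule directed_affine_family_Inter)
    show "K ` Q \<noteq> {}" using Q(1) by blast
    show "vs.affine_subspace A \<and> A \<subseteq> V p" if A: "A \<in> K ` Q" for A
    proof -
      obtain q where "q \<in> Q" "A = K q" using A by blast
      then show ?thesis
        using vs.subspace_kernel[OF U(1) linear_on_subset[OF linear_on_phi[OF Q(2)] U(2)]] U(2)
          vs.subspace_imp_affine_subspace unfolding K_def by blast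
    qed
    show "\<exists>C\<in>K ` Q. C \<subseteq> A \<and> C \<subseteq> B" if AB: "A \<in> K ` Q" "B \<in> K ` Q" for A B
    proof -
      obtain q q' where q: "q \<in> Q" "q' \<in> Q" "A = K q" "B = K q'" using AB by blast
      then consider "q \<le> q'" | "q' \<le> q" using chain by blast
      then show ?thesis using q mono Q(2) by cases blast+
    qed
  qed
  then show ?thesis unfolding K_def by auto
qed

lemma affine_system_chain_Inter:
  assumes "C \<noteq> {}" and sys: "\<And>A. A \<in> C \<Longrightarrow> affine_system A"
    and chain: "\<forall>A\<in>C. \<forall>B\<in>C. A \<le> B \<or> B \<le> A"
  shows "affine_system (\<lambda>p. \<Inter>A\<in>C. A p)"
proof -
  have "(\<Inter>A\<in>C. A p) \<in> (\<lambda>A. A p) ` C" for p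
  proof (rule directed_affine_family_Inter)
    show "(\<lambda>A. A p) ` C \<noteq> {}" using assms(1) by blast
    show "vs.affine_subspace X \<and> X \<subseteq> V p" if X: "X \<in> (\<lambda>A. A p) ` C" for X
    proof -
      obtain A where "A \<in> C" "X = A p" using X by blast
      then show ?thesis using affine_systemD[OF sys] by blast
    qed
    show "\<exists>Z\<in>(\<lambda>A. A p) ` C. Z \<subseteq> X \<and> Z \<subseteq> Y" if XY: "X \<in> (\<lambda>A. A p) ` C" "Y \<in> (\<lambda>A. A p) ` C" for X Y
    proof -
      obtain A B where AB: "A \<in> C" "X = A p" "B \<in> C" "Y = B p" using XY by blast
      then have "A p \<subseteq> B p \<or> B p \<subseteq> A p" using chain unfolding le_fun_def by blast
      then show ?thesis using AB by blast
    qed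
  qed
  then have mem: "\<exists>A\<in>C. (\<Inter>A\<in>C. A p) = A p" for p by blast
  show ?thesis
  proof (rule affine_systemI)
    show "vs.affine_subspace (\<Inter>A\<in>C. A p)" "(\<Inter>A\<in>C. A p) \<subseteq> V p" for p
      using mem[of p] affine_systemD[OF sys] by metis+
    show "phi p q ` (\<Inter>A\<in>C. A p) \<subseteq> (\<Inter>A\<in>C. A q)" if pq: "p \<le> q" for p q
    proof -
      have "phi p q ` A p \<subseteq> A q" if "A \<in> C" for A using affine_systemD(3)[OF sys[OF that] pq] .
      then show ?thesis by blast
    qed
  qed
qed

lemma minimal_affine_system:
  assumes "affine_system A"
  obtains M where "affine_system M" "M \<le> A" "\<And>B. affine_system B \<Longrightarrow> B \<le> M \<Longrightarrow> B = M"
proof -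
  define F where "F = {B. affine_system B \<and> B \<le> A}"
  have "\<exists>M\<in>F. \<forall>B\<in>F. B \<le> M \<longrightarrow> B = M"
  proof (rule Zorn_minimal)
    show "F \<noteq> {}" using assms unfolding F_def by blast
    fix C assume C: "C \<subseteq> F" "C \<noteq> {}" "\<forall>a\<in>C. \<forall>b\<in>C. a \<le> b \<or> b \<le> a"
    have "affine_system (\<lambda>p. \<Inter>B\<in>C. B p)"
      using affine_system_chain_Inter[OF C(2) _ C(3)] C(1) unfolding F_def by blast
    moreover have "(\<lambda>p. \<Inter>B\<in>C. B p) \<le> A" using C(1,2) unfolding F_def le_fun_def by blast
    moreover have "\<forall>B\<in>C. (\<lambda>p. \<Inter>B\<in>C. B p) \<le> B" unfolding le_fun_def by blast
    ultimately show "\<exists>l\<in>F. \<forall>a\<in>C. l \<le> a" unfolding F_def by blast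
  qed
  then obtain M where M: "M \<in> F" and minimal: "\<forall>B\<in>F. B \<le> M \<longrightarrow> B = M" by blast
  show ?thesis
  proof (rule that)
    show "affine_system M" "M \<le> A" using M unfolding F_def by blast+
    show "B = M" if "affine_system B" "B \<le> M" for B
      using minimal that \<open>M \<le> A\<close> unfolding F_def by (blast intro: order_trans)
  qed
qed

lemma stable_image_in_family:
  assumes codirected: "\<And>p q. \<exists>r::'p. r \<le> p \<and> r \<le> q"
    and I: "i \<in> I" "\<And>r r'. r' \<le> r \<Longrightarrow> r \<in> I \<Longrightarrow> r' \<in> I"
    and F: "\<And>r. r \<in> I \<Longrightarrow> vs.affine_subspace (F r) \<and> F r \<subseteq> V r"
      "\<And>r r'. r \<le> r' \<Longrightarrow> r' \<in> I \<Longrightarrow> phi r r' ` F r \<subseteq> F r'"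
  shows "(\<Inter>r\<in>{r\<in>I. r \<le> p}. phi r p ` F r) \<in> (\<lambda>r. phi r p ` F r) ` {r\<in>I. r \<le> p}"
proof (rule directed_affine_family_Inter)
  show "(\<lambda>r. phi r p ` F r) ` {r\<in>I. r \<le> p} \<noteq> {}"
    using codirected[of i p] I by blast
  show "vs.affine_subspace X \<and> X \<subseteq> V p" if "X \<in> (\<lambda>r. phi r p ` F r) ` {r\<in>I. r \<le> p}" for X
    using that F(1) affine_subspace_phi_image by blast
  show "\<exists>Z\<in>(\<lambda>r. phi r p ` F r) ` {r\<in>I. r \<le> p}. Z \<subseteq> X \<and> Z \<subseteq> Y"
    if XY: "X \<in> (\<lambda>r. phi r p ` F r) ` {r\<in>I. r \<le> p}" "Y \<in> (\<lambda>r. phi r p ` F r) ` {r\<in>I. r \<le> p}" for X Y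
  proof -
    obtain r1 r2 where r: "r1 \<in> I" "r1 \<le> p" "X = phi r1 p ` F r1" "r2 \<in> I" "r2 \<le> p" "Y = phi r2 p ` F r2"
      using XY by blast
    obtain r3 where r3: "r3 \<le> r1" "r3 \<le> r2" using codirected by blast
    then have "r3 \<in> I" "r3 \<le> p" using I(2) r order_trans by blast+
    then show ?thesis
      using phi_image_shrink[OF r3(1) r(2) _ F(2)[OF r3(1) r(1)]] phi_image_shrink[OF r3(2) r(5) _ F(2)[OF r3(2) r(4)]]
        F(1)[OF \<open>r3 \<in> I\<close>] r(3,6) by blast
  qed
qed

lemma affine_system_stable_images:
  assumes codirected: "\<And>p q. \<exists>r::'p. r \<le> p \<and> r \<le> q"
    and M: "affine_system M" and I: "i \<in> I" "\<And>r r'. r' \<le> r \<Longrightarrow> r \<in> I \<Longrightarrow> r' \<in> I"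
    and F: "\<And>r. r \<in> I \<Longrightarrow> vs.affine_subspace (F r) \<and> F r \<subseteq> M r"
      "\<And>r r'. r \<le> r' \<Longrightarrow> r' \<in> I \<Longrightarrow> phi r r' ` F r \<subseteq> F r'"
  shows "affine_system (\<lambda>p. \<Inter>r\<in>{r\<in>I. r \<le> p}. phi r p ` F r)"
    and "(\<lambda>p. \<Inter>r\<in>{r\<in>I. r \<le> p}. phi r p ` F r) \<le> M"
proof -
  have FV: "vs.affine_subspace (F r) \<and> F r \<subseteq> V r" if "r \<in> I" for r
    using F(1)[OF that] affine_systemD(2)[OF M] by blast
  define B where "B p = (\<Inter>r\<in>{r\<in>I. r \<le> p}. phi r p ` F r)" for p
  have "B p \<in> (\<lambda>r. phi r p ` F r) ` {r\<in>I. r \<le> p}" for p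
    unfolding B_def using stable_image_in_family[OF codirected I FV F(2)] .
  then have Bmem: "\<exists>r\<in>I. r \<le> p \<and> B p = phi r p ` F r" for p by blast
  have FV': "F r \<subseteq> V r" if "r \<in> I" for r using FV[OF that] ..
  have compatible: "phi p q ` B p \<subseteq> B q" if "p \<le> q" for p q
    unfolding B_def by (rule stable_images_compatible[OF codirected I(2) FV' F(2) that])
  show "affine_system B"
  proof (rule affine_systemI)
    fix p
    obtain r where "r \<in> I" "r \<le> p" "B p = phi r p ` F r" using Bmem by blast
    then show "vs.affine_subspace (B p)" "B p \<subseteq> V p"
      using affine_subspace_phi_image[of "F r" r p] FV by auto
  qed (rule compatible)
  have "B p \<subseteq> M p" for p
  proof -
    obtain r where r: "r \<in> I" "r \<le> p" "B p = phi r p ` F r" using Bmem by blast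
    then have "B p \<subseteq> phi r p ` M r" using F(1)[OF r(1)] by blast
    then show ?thesis using affine_systemD(3)[OF M r(2)] by blast
  qed
  then show "B \<le> M" unfolding le_fun_def by blast
qed

lemma minimal_affine_system_onto:
  assumes codirected: "\<And>p q. \<exists>r::'p. r \<le> p \<and> r \<le> q"
    and M: "affine_system M" and minimal: "\<And>B. affine_system B \<Longrightarrow> B \<le> M \<Longrightarrow> B = M"
    and "r \<le> p"
  shows "M p \<subseteq> phi r p ` M r"
proof -
  have eq: "(\<lambda>p. \<Inter>r\<in>{r\<in>UNIV. r \<le> p}. phi r p ` M r) = M"
    by (rule minimal; rule affine_system_stable_images[OF codirected M, where I = UNIV])
      (use affine_systemD[OF M] in auto)
  show ?thesis using fun_cong[OF eq, of p] assms(4) by auto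
qed

text \<open>The fibre of M over z \<in> M p0 is, below p0, again a subsystem (nonempty because M is onto),
  so its stable images form an affine system inside M; minimality then leaves only z at p0.\<close>
lemma minimal_affine_system_singleton:
  assumes codirected: "\<And>p q. \<exists>r::'p. r \<le> p \<and> r \<le> q"
    and M: "affine_system M" and minimal: "\<And>B. affine_system B \<Longrightarrow> B \<le> M \<Longrightarrow> B = M"
    and z: "z \<in> M p0"
  shows "M p0 = {z}"
proof -
  note MV = affine_systemD(2)[OF M]
  define F where "F r = {w \<in> M r. phi r p0 w = z}" for r
  have Faff: "vs.affine_subspace (F r) \<and> F r \<subseteq> M r" if r: "r \<in> {r. r \<le> p0}" for r
  proof -
    obtain w0 where w0: "w0 \<in> M r" "phi r p0 w0 = z"
      using minimal_affine_system_onto[OF codirected M minimal, of r p0] r z by auto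
    have "F r = {w \<in> M r. phi r p0 w = phi r p0 w0}" unfolding F_def using w0(2) by simp
    then show ?thesis
      using vs.affine_subspace_fibre[OF affine_systemD(1)[OF M] MV w0(1) subspace_V linear_on_phi] r
      unfolding F_def by auto
  qed
  have Fphi: "phi r r' ` F r \<subseteq> F r'" if "r \<le> r'" "r' \<in> {r. r \<le> p0}" for r r'
    using that affine_systemD(3)[OF M] MV phi_comp unfolding F_def by fastforce
  have eq: "(\<lambda>p. \<Inter>r\<in>{r\<in>{r. r \<le> p0}. r \<le> p}. phi r p ` F r) = M"
    by (rule minimal; rule affine_system_stable_images[OF codirected M, of p0 "{r. r \<le> p0}" F])
      (use Faff Fphi in \<open>auto intro: order_trans\<close>)
  have "M p0 \<subseteq> phi p0 p0 ` F p0" using fun_cong[OF eq, of p0] by auto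
  also have "\<dots> \<subseteq> {z}" using MV unfolding F_def by auto
  finally show ?thesis using z by blast
qed

text \<open>Mittag-Leffler: a minimal affine system below A consists of single points, and these
  points form a global section.\<close>
theorem affine_system_has_section:
  assumes codirected: "\<And>p q. \<exists>r::'p. r \<le> p \<and> r \<le> q" and A: "affine_system A"
  obtains f where "global_section f" "\<And>p. f p \<in> A p"
proof -
  obtain M where M: "affine_system M" "M \<le> A"
    and minimal: "\<And>B. affine_system B \<Longrightarrow> B \<le> M \<Longrightarrow> B = M"
    using minimal_affine_system[OF A] by blast
  define f where "f p = (SOME w. w \<in> M p)" for p
  have f: "M p = {f p}" for p
    using minimal_affine_system_singleton[OF codirected M(1) minimal]
      vs.affine_subspace_nonempty[OF affine_systemD(1)[OF M(1)]] unfolding f_def by (metis ex_in_conv someI)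
  show ?thesis
  proof (rule that)
    show "global_section f"
      unfolding global_section_def using f affine_systemD(2,3)[OF M(1)] by blast
    show "f p \<in> A p" for p using f M(2) unfolding le_fun_def by blast
  qed
qed

lemma lift_vanishing_outside:
  assumes pq: "p \<le> q" and w: "w \<in> vanishing_outside D q"
    and R: "R \<noteq> {}" "\<And>r r'. r \<in> R \<Longrightarrow> r' \<in> R \<Longrightarrow> r \<le> r' \<or> r' \<le> r"
    and square: "\<And>r. r \<in> R \<Longrightarrow> \<exists>d. d \<notin> D \<and> exact_square p q r d"
    and cover: "\<And>e. p \<le> e \<Longrightarrow> e \<notin> D \<Longrightarrow> q \<le> e \<or> (\<exists>r\<in>R. r \<le> e)"
  shows "\<exists>z\<in>vanishing_outside D p. phi p q z = w"
proof -
  have pR: "p \<le> r" if "r \<in> R" for r using square[OF that] unfolding exact_square_def by blast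
  obtain r0 where r0: "r0 \<in> R"
    and least: "\<And>r. r \<in> R \<Longrightarrow> {u \<in> V p. phi p r0 u = 0} \<subseteq> {u \<in> V p. phi p r u = 0}"
    using kernel_chain_has_least[OF subspace_V order_refl R(1) pR R(2)] by blast
  obtain d where d: "d \<notin> D" "exact_square p q r0 d" using square[OF r0] by blast
  have wV: "w \<in> V q" using w vanishing_outside_subset_V by blast
  have "phi q d w = 0" "phi r0 d 0 = 0"
    using w d unfolding vanishing_outside_def exact_square_def by auto
  then obtain z where z: "z \<in> V p" "phi p q z = w" "phi p r0 z = 0"
    using d(2) wV unfolding exact_square_def by (metis zero_in_V)
  have "z \<in> vanishing_outside D p"
    unfolding vanishing_outside_def
  proof (intro CollectI conjI allI impI)
    show "z \<in> V p" by fact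
    fix e assume e: "p \<le> e" "e \<notin> D"
    from cover[OF e] show "phi p e z = 0"
    proof
      assume "q \<le> e"
      then show ?thesis using phi_comp[OF pq _ z(1)] w z(2) e(2) unfolding vanishing_outside_def by auto
    next
      assume "\<exists>r\<in>R. r \<le> e"
      then obtain r where r: "r \<in> R" "r \<le> e" by blast
      then have "phi p r z = 0" using least z by blast
      then show ?thesis using phi_comp[OF pR[OF r(1)] r(2) z(1)] r(2) by simp
    qed
  qed
  then show ?thesis using z(2) by blast
qed

end

section \<open>Middle exact modules over S \<times> T\<close>

lemma product_support_directed:
  fixes f :: "'a::linorder \<times> 'b::linorder \<Rightarrow> 'c::zero"
  assumes "{p. f p \<noteq> 0} = JS \<times> JT" "f q \<noteq> 0" "f q' \<noteq> 0"
  shows "\<exists>r. q \<le> r \<and> q' \<le> r \<and> f r \<noteq> 0"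
proof -
  have supp: "f p \<noteq> 0 \<longleftrightarrow> p \<in> JS \<times> JT" for p using assms(1) by blast
  have "(max (fst q) (fst q'), max (snd q) (snd q')) \<in> JS \<times> JT"
    using assms(2,3) supp by (simp add: mem_Times_iff max_def)
  then show ?thesis using supp
    by (intro exI[of _ "(max (fst q) (fst q'), max (snd q) (snd q'))"]) (simp add: less_eq_prod_def)
qed

lemma down_closed_le_outside:
  fixes s :: "'a::linorder"
  shows "down_closed J \<Longrightarrow> s \<in> J \<Longrightarrow> \<sigma> \<notin> J \<Longrightarrow> s \<le> \<sigma>"
  unfolding down_closed_def by (metis le_cases)

locale mx = pfd_pmod scale V phi
  for scale :: "'k::field \<Rightarrow> 'v::ab_group_add \<Rightarrow> 'v"
    and V :: "'s::linorder \<times> 't::linorder \<Rightarrow> 'v set"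
    and phi :: "'s \<times> 't \<Rightarrow> 's \<times> 't \<Rightarrow> 'v \<Rightarrow> 'v" +
  assumes middle_exact: "middle_exact V phi"
begin

lemma exact_square_grid:
  assumes "x \<le> x'" "y \<le> y'"
  shows "exact_square (x, y) (x, y') (x', y) (x', y')"
proof -
  have eq: "{(u, w). u \<in> V (x, y') \<and> w \<in> V (x', y) \<and> phi (x, y') (x', y') u - phi (x', y) (x', y') w = 0}
      = {(phi (x, y) (x, y') v, phi (x, y) (x', y) v) | v. v \<in> V (x, y)}"
    using middle_exact[unfolded middle_exact_def Let_def, rule_format, OF conjI[OF assms]] .
  show ?thesis
    unfolding exact_square_def
  proof (intro conjI ballI impI)
    fix u w assume "u \<in> V (x, y')" "w \<in> V (x', y)" "phi (x, y') (x', y') u = phi (x', y) (x', y') w"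
    then have "(u, w) \<in> {(u, w). u \<in> V (x, y') \<and> w \<in> V (x', y) \<and>
        phi (x, y') (x', y') u - phi (x', y) (x', y') w = 0}" by simp
    then show "\<exists>z\<in>V (x, y). phi (x, y) (x, y') z = u \<and> phi (x, y) (x', y) z = w"
      unfolding eq by blast
  qed (use assms in simp_all)
qed

lemma lift_vanishing_outside_horizontal:
  assumes JS: "down_closed JS" and JT: "down_closed JT" "\<tau> \<notin> JT"
    and st: "s0 \<le> s" "s \<in> JS" "t \<in> JT" and w: "w \<in> vanishing_outside (JS \<times> JT) (s, t)"
  shows "\<exists>z\<in>vanishing_outside (JS \<times> JT) (s0, t). phi (s0, t) (s, t) z = w"
proof (rule lift_vanishing_outside[where R = "{(s0, \<tau>') | \<tau>'. \<tau>' \<notin> JT}"])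
  show "{(s0, \<tau>') | \<tau>'. \<tau>' \<notin> JT} \<noteq> {}" using JT(2) by blast
  show "r \<le> r' \<or> r' \<le> r" if "r \<in> {(s0, \<tau>') | \<tau>'. \<tau>' \<notin> JT}" "r' \<in> {(s0, \<tau>') | \<tau>'. \<tau>' \<notin> JT}" for r r'
    using that by (auto simp: linear)
  show "\<exists>d. d \<notin> JS \<times> JT \<and> exact_square (s0, t) (s, t) r d" if r: "r \<in> {(s0, \<tau>') | \<tau>'. \<tau>' \<notin> JT}" for r
  proof -
    obtain \<tau>' where "r = (s0, \<tau>')" "\<tau>' \<notin> JT" using r by blast
    moreover have "t \<le> \<tau>'" using down_closed_le_outside[OF JT(1) st(3)] calculation(2) .
    ultimately show ?thesis using exact_square_swap[OF exact_square_grid[OF st(1)]] by blast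
  qed
  show "(s, t) \<le> e \<or> (\<exists>r\<in>{(s0, \<tau>') | \<tau>'. \<tau>' \<notin> JT}. r \<le> e)" if "(s0, t) \<le> e" "e \<notin> JS \<times> JT" for e
    using that down_closed_le_outside[OF JS st(2)] by (cases e) auto
qed (use st w in simp_all)

lemma lift_vanishing_outside_vertical:
  assumes JS: "down_closed JS" "\<sigma> \<notin> JS" and JT: "down_closed JT"
    and st: "t0 \<le> t" "s \<in> JS" "t \<in> JT" and w: "w \<in> vanishing_outside (JS \<times> JT) (s, t)"
  shows "\<exists>z\<in>vanishing_outside (JS \<times> JT) (s, t0). phi (s, t0) (s, t) z = w"
proof (rule lift_vanishing_outside[where R = "{(\<sigma>', t0) | \<sigma>'. \<sigma>' \<notin> JS}"])
  show "{(\<sigma>', t0) | \<sigma>'. \<sigma>' \<notin> JS} \<noteq> {}" using JS(2) by blast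
  show "r \<le> r' \<or> r' \<le> r" if "r \<in> {(\<sigma>', t0) | \<sigma>'. \<sigma>' \<notin> JS}" "r' \<in> {(\<sigma>', t0) | \<sigma>'. \<sigma>' \<notin> JS}" for r r'
    using that by (auto simp: linear)
  show "\<exists>d. d \<notin> JS \<times> JT \<and> exact_square (s, t0) (s, t) r d" if r: "r \<in> {(\<sigma>', t0) | \<sigma>'. \<sigma>' \<notin> JS}" for r
  proof -
    obtain \<sigma>' where "r = (\<sigma>', t0)" "\<sigma>' \<notin> JS" using r by blast
    moreover have "s \<le> \<sigma>'" using down_closed_le_outside[OF JS(1) st(2)] calculation(2) .
    ultimately show ?thesis using exact_square_grid[OF _ st(1)] by blast
  qed
  show "(s, t) \<le> e \<or> (\<exists>r\<in>{(\<sigma>', t0) | \<sigma>'. \<sigma>' \<notin> JS}. r \<le> e)" if "(s, t0) \<le> e" "e \<notin> JS \<times> JT" for e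
    using that down_closed_le_outside[OF JT st(3)] by (cases e) auto
qed (use st w in simp_all)

lemma lift_vanishing_outside_product:
  assumes JS: "down_closed JS" "\<sigma> \<notin> JS" and JT: "down_closed JT" "\<tau> \<notin> JT"
    and pq: "p \<le> q" "q \<in> JS \<times> JT" and w: "w \<in> vanishing_outside (JS \<times> JT) q"
  shows "\<exists>z\<in>vanishing_outside (JS \<times> JT) p. phi p q z = w"
proof -
  obtain s0 t0 s t where pq_eq: "p = (s0, t0)" "q = (s, t)" by (cases p, cases q)
  have le: "s0 \<le> s" "t0 \<le> t" and st: "s \<in> JS" "t \<in> JT" using pq unfolding pq_eq by auto
  have s0: "s0 \<in> JS" using JS(1) st(1) le(1) unfolding down_closed_def by blast
  obtain z1 where z1: "z1 \<in> vanishing_outside (JS \<times> JT) (s0, t)" "phi (s0, t) (s, t) z1 = w"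
    using lift_vanishing_outside_horizontal[OF JS(1) JT le(1) st] w pq_eq(2) by blast
  obtain z where z: "z \<in> vanishing_outside (JS \<times> JT) (s0, t0)" "phi (s0, t0) (s0, t) z = z1"
    using lift_vanishing_outside_vertical[OF JS JT(1) le(2) s0 st(2) z1(1)] by blast
  have "z \<in> V (s0, t0)" using z(1) vanishing_outside_subset_V by blast
  then have "phi (s0, t0) (s, t) z = w"
    using phi_comp[of "(s0, t0)" "(s0, t)" "(s, t)" z] z(2) le z1(2) by auto
  then show ?thesis using z(1) unfolding pq_eq by blast
qed

text \<open>If u dies at (s, t) but not at (x, t), middle exactness lifts the pair (image of u at
  (x, t), 0 at (s, y)) to a vector at (x, y) in the joint kernel; it is nonzero since its image at
  (x, t) is.\<close>
lemma product_support_from_trivial_kernel: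
  assumes "y \<le> y'" and u: "u \<in> V (x, y)" "phi (x, y) (x, y') u = 0"
    and trivial: "{w \<in> V (x, y). phi (x, y) (x, y') w = 0 \<and> phi (x, y) (s, y) w = 0} = {0}"
    and st: "x \<le> s" "y \<le> t" "phi (x, y) (x, t) u \<noteq> 0"
  shows "phi (x, y) (s, t) u \<noteq> 0"
proof
  assume zero: "phi (x, y) (s, t) u = 0"
  have "t \<le> y'"
  proof (rule ccontr)
    assume "\<not> t \<le> y'"
    then have "y' \<le> t" by simp
    then show False using phi_comp[of "(x, y)" "(x, y')" "(x, t)" u] u assms(1) st(3) by simp
  qed
  define u1 where "u1 = phi (x, y) (x, t) u"
  have u1: "u1 \<in> V (x, t)" unfolding u1_def using phi_in_V u(1) st(2) by simp
  have "phi (x, t) (s, t) u1 = phi (s, y) (s, t) 0"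
    unfolding u1_def using phi_comp[of "(x, y)" "(x, t)" "(s, t)" u] u(1) st zero by simp
  then obtain z where z: "z \<in> V (x, y)" "phi (x, y) (x, t) z = u1" "phi (x, y) (s, y) z = 0"
    using exact_square_grid[OF st(1,2)] u1 unfolding exact_square_def by (metis zero_in_V)
  have "phi (x, y) (x, y') z = phi (x, t) (x, y') u1"
    using phi_comp[of "(x, y)" "(x, t)" "(x, y')" z] z \<open>t \<le> y'\<close> st(2) by simp
  also have "\<dots> = 0"
    unfolding u1_def using phi_comp[of "(x, y)" "(x, t)" "(x, y')" u] u \<open>t \<le> y'\<close> st(2) by simp
  finally have "z = 0" using trivial z(1,3) by blast
  then show False using z(2) st(2,3) unfolding u1_def by simp
qed

lemma kernel_vector_with_product_support:
  assumes xy: "x \<le> x'" "y \<le> y'"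
    and v: "v \<in> V (x, y)" "v \<noteq> 0" "phi (x, y) (x, y') v = 0" "phi (x, y) (x', y) v = 0"
  obtains u where "u \<in> V (x, y)" "u \<noteq> 0" "phi (x, y) (x, y') u = 0" "phi (x, y) (x', y) u = 0"
    "\<And>s t. x \<le> s \<Longrightarrow> y \<le> t \<Longrightarrow> phi (x, y) (s, y) u \<noteq> 0 \<Longrightarrow> phi (x, y) (x, t) u \<noteq> 0 \<Longrightarrow>
      phi (x, y) (s, t) u \<noteq> 0"
proof -
  define a where "a = (x, y)"
  define U where "U = {w \<in> V a. phi a (x, y') w = 0}"
  define K where "K s = {w \<in> U. phi a (s, y) w = 0}" for s
  have U: "vs.subspace U" "U \<subseteq> V a"
    unfolding U_def a_def using vs.subspace_kernel[OF subspace_V linear_on_phi] xy(2) by auto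
  have K: "vs.subspace (K s)" if "x \<le> s" for s
    unfolding K_def using vs.subspace_kernel[OF U(1) linear_on_subset[OF linear_on_phi U(2)]] that
    by (simp add: a_def)
  define Q where "Q = {(s, y) | s. x \<le> s \<and> K s \<noteq> {0}}"
  have vK: "v \<in> K x'" unfolding K_def U_def a_def using v by simp
  then have x'Q: "(x', y) \<in> Q" unfolding Q_def using xy(1) v(2) by blast
  have Q: "Q \<noteq> {}" "\<And>q. q \<in> Q \<Longrightarrow> a \<le> q" "\<And>q q'. q \<in> Q \<Longrightarrow> q' \<in> Q \<Longrightarrow> q \<le> q' \<or> q' \<le> q"
    using x'Q unfolding Q_def a_def by (auto simp: linear)
  obtain q0 where "q0 \<in> Q" and "\<forall>q\<in>Q. {u \<in> U. phi a q0 u = 0} \<subseteq> {u \<in> U. phi a q u = 0}"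
    using kernel_chain_has_least[OF U Q] by blast
  then obtain s0 where s0: "x \<le> s0" "K s0 \<noteq> {0}"
    and least: "\<And>s. x \<le> s \<Longrightarrow> K s \<noteq> {0} \<Longrightarrow> K s0 \<subseteq> K s"
    unfolding Q_def K_def by blast
  obtain u where u: "u \<in> K s0" "u \<noteq> 0"
    using s0 vs.subspace_0[OF K[OF s0(1)]] by blast
  have uV: "u \<in> V a" and ub: "phi a (x, y') u = 0" using u(1) unfolding K_def U_def by auto
  have K0: "K s = {0}" if "x \<le> s" "phi a (s, y) u \<noteq> 0" for s
    using least[OF that(1)] u(1) that(2) unfolding K_def by blast
  show ?thesis
  proof (rule that)
    show "u \<in> V (x, y)" "u \<noteq> 0" "phi (x, y) (x, y') u = 0" using uV u(2) ub by (simp_all add: a_def)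
    show "phi (x, y) (x', y) u = 0"
      using least[OF xy(1)] vK v(2) u(1) unfolding K_def a_def by blast
    fix s t assume st: "x \<le> s" "y \<le> t" "phi (x, y) (s, y) u \<noteq> 0" "phi (x, y) (x, t) u \<noteq> 0"
    have "{w \<in> V (x, y). phi (x, y) (x, y') w = 0 \<and> phi (x, y) (s, y) w = 0} = {0}"
      using K0[OF st(1)] st(3) unfolding K_def U_def a_def by auto
    then show "phi (x, y) (s, t) u \<noteq> 0"
      using product_support_from_trivial_kernel[OF xy(2) _ _ _ st(1,2,4)] uV ub by (simp add: a_def)
  qed
qed

lemma section_extending_vanishing_vector:
  assumes JS: "down_closed JS" "\<sigma> \<notin> JS" and JT: "down_closed JT" "\<tau> \<notin> JT"
    and a: "(x, y) \<in> JS \<times> JT" and u: "u \<in> vanishing_outside (JS \<times> JT) (x, y)"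
  obtains f where "global_section f" "\<And>p. p \<notin> JS \<times> JT \<Longrightarrow> f p = 0"
    "\<And>s t. (s, t) \<in> JS \<times> JT \<Longrightarrow>
      phi (s, t) (max s x, max t y) (f (s, t)) = phi (x, y) (max s x, max t y) u"
proof -
  define D where "D = JS \<times> JT"
  define j where "j p = (max (fst p) x, max (snd p) y)" for p :: "'s \<times> 't"
  have j: "p \<le> j p" "(x, y) \<le> j p" "p \<le> q \<Longrightarrow> j p \<le> j q" for p q
    unfolding j_def less_eq_prod_def by (auto simp: max_def)
  have D_down: "p \<in> D" if "p \<le> q" "q \<in> D" for p q
    using that JS(1) JT(1) unfolding D_def down_closed_def less_eq_prod_def by (cases p, cases q) auto
  have lift: "\<exists>w\<in>vanishing_outside D p. phi p (j p) w = phi (x, y) (j p) u" if "p \<in> D" for p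
  proof (rule lift_vanishing_outside_product[OF JS JT j(1), folded D_def])
    show "j p \<in> D" using that a unfolding j_def D_def by (auto simp: max_def)
    show "phi (x, y) (j p) u \<in> vanishing_outside D (j p)"
      using phi_vanishing_outside[OF j(2)] u unfolding D_def by blast
  qed
  have sys: "affine_system (\<lambda>p. if p \<in> D
      then {w \<in> vanishing_outside D p. phi p (j p) w = phi (x, y) (j p) u} else {0})"
    using affine_system_vanishing_fibres[OF D_down j(1) j(2) j(3) u[folded D_def] lift] .
  have "\<exists>r. r \<le> p \<and> r \<le> q" for p q :: "'s \<times> 't"
    by (rule exI[of _ "(min (fst p) (fst q), min (snd p) (snd q))"]) (simp add: less_eq_prod_def)
  then obtain f where f: "global_section f"
    and fA: "\<And>p. f p \<in> (if p \<in> D then {w \<in> vanishing_outside D p. phi p (j p) w = phi (x, y) (j p) u} else {0})"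
    using affine_system_has_section[OF _ sys] by blast
  show ?thesis
  proof (rule that[OF f])
    show "f p = 0" if "p \<notin> JS \<times> JT" for p using fA[of p] that unfolding D_def by simp
    show "phi (s, t) (max s x, max t y) (f (s, t)) = phi (x, y) (max s x, max t y) u"
      if "(s, t) \<in> JS \<times> JT" for s t
      using fA[of "(s, t)"] that unfolding D_def j_def by simp
  qed
qed

lemma section_with_product_support:
  assumes xy: "x \<le> x'" "y \<le> y'"
    and u: "u \<in> V (x, y)" "u \<noteq> 0" "phi (x, y) (x, y') u = 0" "phi (x, y) (x', y) u = 0"
    and product: "\<And>s t. x \<le> s \<Longrightarrow> y \<le> t \<Longrightarrow> phi (x, y) (s, y) u \<noteq> 0 \<Longrightarrow> phi (x, y) (x, t) u \<noteq> 0 \<Longrightarrow>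
      phi (x, y) (s, t) u \<noteq> 0"
  obtains JS JT f where "JS \<noteq> {}" "JT \<noteq> {}" "down_closed JS" "down_closed JT"
    "global_section f" "{p. f p \<noteq> 0} = JS \<times> JT"
proof -
  define JS where "JS = {s. phi (x, y) (max s x, y) u \<noteq> 0}"
  define JT where "JT = {t. phi (x, y) (x, max t y) u \<noteq> 0}"
  have "phi (x, y) (max s x, y) u \<noteq> 0 \<and> phi (x, y) (x, max t y) u \<noteq> 0"
    if "phi (x, y) (max s x, max t y) u \<noteq> 0" for s t
    using phi_nonzero_below[of "(x, y)" "(max s x, y)" "(max s x, max t y)" u]
      phi_nonzero_below[of "(x, y)" "(x, max t y)" "(max s x, max t y)" u] u(1) that by simp
  then have support: "phi (x, y) (max s x, max t y) u \<noteq> 0 \<longleftrightarrow> (s, t) \<in> JS \<times> JT" for s t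
    using product[of "max s x" "max t y"] unfolding JS_def JT_def by auto
  have JS_down: "down_closed JS"
    unfolding JS_def by (rule down_closed_nonvanishing[OF u(1)]) (auto simp: mono_def max_def)
  have JT_down: "down_closed JT"
    unfolding JT_def by (rule down_closed_nonvanishing[OF u(1)]) (auto simp: mono_def max_def)
  have a: "(x, y) \<in> JS \<times> JT" using u(1,2) unfolding JS_def JT_def by simp
  have x': "x' \<notin> JS" and y': "y' \<notin> JT"
    using xy u(3,4) unfolding JS_def JT_def by (simp_all add: max_def)
  have "u \<in> vanishing_outside (JS \<times> JT) (x, y)"
    unfolding vanishing_outside_def
  proof (intro CollectI conjI allI impI)
    show "u \<in> V (x, y)" by (rule u(1))
    fix e assume e: "(x, y) \<le> e" "e \<notin> JS \<times> JT"
    obtain a b where ab: "e = (a, b)" by (cases e)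
    then have "max a x = a" "max b y = b" using e(1) by (simp_all add: max_absorb1)
    then show "phi (x, y) e u = 0" using support[of a b] e(2) ab by auto
  qed
  then obtain f where f: "global_section f" "\<And>p. p \<notin> JS \<times> JT \<Longrightarrow> f p = 0"
    and agree: "\<And>s t. (s, t) \<in> JS \<times> JT \<Longrightarrow>
      phi (s, t) (max s x, max t y) (f (s, t)) = phi (x, y) (max s x, max t y) u"
    using section_extending_vanishing_vector[OF JS_down x' JT_down y' a] by blast
  have "f (s, t) \<noteq> 0" if "(s, t) \<in> JS \<times> JT" for s t
    using agree[OF that] support[of s t] that by auto
  then have "{p. f p \<noteq> 0} = JS \<times> JT" using f(2) by auto
  then show ?thesis using that a JS_down JT_down f(1) by blast
qed

end

theorem lemma5p5:
  fixes scale :: "'k::field \<Rightarrow> 'v::ab_group_add \<Rightarrow> 'v"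
    and V :: "'s::linorder \<times> 't::linorder \<Rightarrow> 'v set"
    and phi :: "'s \<times> 't \<Rightarrow> 's \<times> 't \<Rightarrow> 'v \<Rightarrow> 'v"
  assumes "pmodule scale V phi"
    and "pointwise_fin_dim scale V"
    and "middle_exact V phi"
    and "indecomposable scale V phi"
    and "x \<le> x'" and "y \<le> y'"
    and "\<exists>v \<in> V (x, y). v \<noteq> 0 \<and> phi (x, y) (x, y') v = 0 \<and> phi (x, y) (x', y) v = 0"
  shows "\<exists>B. db_block B \<and>
           pmod_iso scale V phi ((*) :: 'k \<Rightarrow> 'k \<Rightarrow> 'k) (kB_space B) (kB_map B)"
proof -
  interpret mx scale V phi by unfold_locales (rule assms)+
  obtain v where v: "v \<in> V (x, y)" "v \<noteq> 0" "phi (x, y) (x, y') v = 0" "phi (x, y) (x', y) v = 0"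
    using assms(7) by blast
  obtain u where u: "u \<in> V (x, y)" "u \<noteq> 0" "phi (x, y) (x, y') u = 0" "phi (x, y) (x', y) u = 0"
    and product: "\<And>s t. x \<le> s \<Longrightarrow> y \<le> t \<Longrightarrow> phi (x, y) (s, y) u \<noteq> 0 \<Longrightarrow>
      phi (x, y) (x, t) u \<noteq> 0 \<Longrightarrow> phi (x, y) (s, t) u \<noteq> 0"
    using kernel_vector_with_product_support[OF assms(5,6) v] by blast
  obtain JS JT f where JS: "JS \<noteq> {}" "down_closed JS" and JT: "JT \<noteq> {}" "down_closed JT"
    and f: "global_section f" and support: "{p. f p \<noteq> 0} = JS \<times> JT"
    by (rule section_with_product_support[OF assms(5,6) u product])
  obtain s t where "s \<in> JS" "t \<in> JT" using JS(1) JT(1) by blast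
  then have "(s, t) \<in> {p. f p \<noteq> 0}" unfolding support by simp
  then have "V p = vs.span {f p}" for p
    using indecomposable_spanned_by_section[OF assms(4) f _ product_support_directed[OF support]] by simp
  then have "pmod_iso scale V phi ((*) :: 'k \<Rightarrow> 'k \<Rightarrow> 'k) (kB_space (JS \<times> JT)) (kB_map (JS \<times> JT))"
    using pmod_iso_kB_if_spanned[OF f] support by metis
  moreover have "db_block (JS \<times> JT)" unfolding db_block_def using JS JT by blast
  ultimately show ?thesis by blast
qed

end
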